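(* Let $P$ and $P'$ be simple polyhedra in $\mathbb{R}^3$ that are combinatorially equivalent to each other (with a fixed combinatorial equivalence). Suppose that each face of a natural development of $P$ is affine-equivalent to the corresponding face of a natural development of $P'$. Then $P$ and $P'$ are affine-equivalent.
   Context: A polyhedron is a connected two-dimensional polyhedral surface in $\mathbb{R}^3$ composed of finitely many convex polygons (its faces), connected in the sense that one can pass from any face to any other by crossing edges (not just vertices). A closed convex polyhedron is strictly convex if none of its dihedral angles equals $\pi$; a strictly convex closed polyhedron is simple if each of its vertices is incident to exactly three edges. Two polyhedra are combinatorially equivalent if there is an incidence-preserving bijection between their vertices, edges and faces. A natural development of a polyhedron $P$ is a finite collection of convex polygons in the plane in one-to-one correspondence with the faces of $P$, each polygon congruent to the corresponding face, such that two elements (faces, sides, vertices) of the collection are incident iff the corresponding elements of $P$ are incident. Two polygons (resp. two combinatorially equivalent polyhedra) are affine-equivalent if there is a nondegenerate affine map carrying the first onto the second and carrying each vertex, edge (and face) to the corresponding one. *)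

theory Defs
  imports "HOL-Analysis.Analysis"
begin

text \<open>A closed convex polyhedron in R^3 is represented by the convex body K it bounds:
a polytope (convex hull of finitely many points) with nonempty interior (aff_dim 3).
The polyhedral surface is the frontier of K.  Its vertices, edges and faces are the
faces of K (in the sense of face_of) of affine dimension 0, 1 and 2 respectively.
With this representation the polyhedron is automatically strictly convex (faces are
maximal planar pieces of the boundary).\<close>

definition convex_polyhedron3 :: "(real^3) set \<Rightarrow> bool" where
  "convex_polyhedron3 K \<longleftrightarrow> polytope K \<and> aff_dim K = 3"

definition cells :: "(real^3) set \<Rightarrow> (real^3) set set" where
  "cells K = {F. F face_of K \<and> 0 \<le> aff_dim F \<and> aff_dim F \<le> 2}"

definition is_vertex :: "real^3 \<Rightarrow> (real^3) set \<Rightarrow> bool" where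
  "is_vertex v K \<longleftrightarrow> {v} face_of K"

definition simple_polyhedron :: "(real^3) set \<Rightarrow> bool" where
  "simple_polyhedron K \<longleftrightarrow> convex_polyhedron3 K \<and>
     (\<forall>v. is_vertex v K \<longrightarrow> card {E. E edge_of K \<and> v \<in> E} = 3)"

definition comb_equiv :: "(real^3) set \<Rightarrow> (real^3) set \<Rightarrow> ((real^3) set \<Rightarrow> (real^3) set) \<Rightarrow> bool" where
  "comb_equiv K K' \<phi> \<longleftrightarrow> bij_betw \<phi> (cells K) (cells K') \<and>
     (\<forall>F\<in>cells K. aff_dim (\<phi> F) = aff_dim F) \<and>
     (\<forall>F\<in>cells K. \<forall>G\<in>cells K. F \<subseteq> G \<longleftrightarrow> \<phi> F \<subseteq> \<phi> G)"

text \<open>A natural development of K: for every face F of K a congruent copy in the plane,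
given by a map dev F that is distance-preserving on F; the polygon is dev F ` F, and
its vertices and sides are the images of the vertices and edges of K lying in F (so
that incidences in the development are exactly those of K).\<close>
definition natural_development :: "(real^3) set \<Rightarrow> ((real^3) set \<Rightarrow> real^3 \<Rightarrow> real^2) \<Rightarrow> bool" where
  "natural_development K dev \<longleftrightarrow>
     (\<forall>F. F facet_of K \<longrightarrow> (\<forall>x\<in>F. \<forall>y\<in>F. dist (dev F x) (dev F y) = dist x y))"

definition nondeg_affine :: "(real^'n \<Rightarrow> real^'n) \<Rightarrow> bool" where
  "nondeg_affine A \<longleftrightarrow> (\<exists>(M::real^'n^'n) c. invertible M \<and> A = (\<lambda>x. M *v x + c))"

definition developments_facewise_affine_equiv ::
  "(real^3) set \<Rightarrow> ((real^3) set \<Rightarrow> real^3 \<Rightarrow> real^2) \<Rightarrow>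
   (real^3) set \<Rightarrow> ((real^3) set \<Rightarrow> real^3 \<Rightarrow> real^2) \<Rightarrow>
   ((real^3) set \<Rightarrow> (real^3) set) \<Rightarrow> bool" where
  "developments_facewise_affine_equiv K dev K' dev' \<phi> \<longleftrightarrow>
     (\<forall>F. F facet_of K \<longrightarrow> (\<exists>A. nondeg_affine A \<and>
        A ` (dev F ` F) = dev' (\<phi> F) ` (\<phi> F) \<and>
        (\<forall>G\<in>cells K. G \<subseteq> F \<longrightarrow> A ` (dev F ` G) = dev' (\<phi> F) ` (\<phi> G))))"

definition polyhedra_affine_equiv ::
  "(real^3) set \<Rightarrow> (real^3) set \<Rightarrow> ((real^3) set \<Rightarrow> (real^3) set) \<Rightarrow> bool" where
  "polyhedra_affine_equiv K K' \<phi> \<longleftrightarrow>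
     (\<exists>A. nondeg_affine A \<and> A ` K = K' \<and> (\<forall>G\<in>cells K. A ` G = \<phi> G))"

end

theory Submission
  imports Defs
begin

(* The combinatorial equivalence induces a bijection \<psi> between the vertices of K and K'.
   Composing the isometric developments with the affine face maps shows that \<psi> preserves
   affine combinations of the vertices of each face.  At a simple vertex v, the three neighbours
   of v together with v form an affine basis, and so do their images under \<psi>; let T be the
   affine map matching these four points.  Every face through v is spanned by v and two of its
   neighbours, so T agrees with \<psi> on all vertices of these faces; since any two edges at a
   simple vertex lie in a common face, this agreement passes from the star of v to the star of
   each neighbour.  The vertex-edge graph of a polytope is connected, so T agrees with \<psi> on
   all vertices, and hence maps every face, the convex hull of its vertices, onto the
   corresponding face. *)

section \<open>Faces of polytopes\<close>

lemma polytope_face_subset_facet: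
  fixes S C :: "'a::euclidean_space set"
  assumes "polytope S" "C face_of S" "C \<noteq> {}" "C \<noteq> S"
  obtains F where "F facet_of S" "C \<subseteq> F"
proof -
  have C: "C = \<Inter>{F. F facet_of S \<and> C \<subseteq> F}"
    using face_of_polyhedron[OF polytope_imp_polyhedron] assms by blast
  have "{F. F facet_of S \<and> C \<subseteq> F} \<noteq> {}"
  proof
    assume "{F. F facet_of S \<and> C \<subseteq> F} = {}"
    then have "C = UNIV" using C by (metis Inter_empty)
    then show False using assms(2,4) face_of_imp_subset by blast
  qed
  then show ?thesis using that by blast
qed

lemma polytope_face_subset_two_facets:
  fixes S C :: "'a::euclidean_space set"
  assumes "polytope S" "C face_of S" "C \<noteq> {}" "aff_dim C < aff_dim S - 1"
  obtains F G where "F facet_of S" "G facet_of S" "F \<noteq> G" "C \<subseteq> F" "C \<subseteq> G"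
proof -
  have "C \<noteq> S" using assms(4) by auto
  then obtain F where F: "F facet_of S" "C \<subseteq> F"
    using polytope_face_subset_facet assms by blast
  have "{G. G facet_of S \<and> C \<subseteq> G} \<noteq> {F}"
  proof
    assume "{G. G facet_of S \<and> C \<subseteq> G} = {F}"
    then have "C = F"
      using face_of_polyhedron[OF polytope_imp_polyhedron] assms \<open>C \<noteq> S\<close> by (metis cInf_singleton)
    then show False using F assms(4) by (auto simp: facet_of_def)
  qed
  then obtain G where "G facet_of S" "C \<subseteq> G" "G \<noteq> F" using F by blast
  then show ?thesis using that F by blast
qed

lemma segment_face_of_imp_vertex:
  fixes S :: "'a::euclidean_space set"
  assumes "closed_segment a b face_of S"
  shows "{a} face_of S" "{b} face_of S"
proof -
  have "{a} face_of closed_segment a b" "{b} face_of closed_segment a b"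
    by (simp_all add: face_of_singleton extreme_point_of_segment)
  then show "{a} face_of S" "{b} face_of S" using assms face_of_trans by blast+
qed

lemma vertex_in_segment_face:
  fixes S :: "'a::euclidean_space set"
  assumes "closed_segment a b face_of S" "{x} face_of S" "x \<in> closed_segment a b"
  shows "x = a \<or> x = b"
proof -
  have "{x} face_of closed_segment a b"
    using assms face_of_subset face_of_imp_subset by blast
  then show ?thesis by (simp add: face_of_singleton extreme_point_of_segment)
qed

lemma polytope_edge_segment:
  fixes S :: "'a::euclidean_space set"
  assumes "polytope S" "e edge_of S"
  obtains a b where "a \<noteq> b" "e = closed_segment a b"
proof -
  have pe: "polytope e" and de: "aff_dim e = 1"
    using assms face_of_polytope_polytope by (auto simp: edge_of_def)
  have "e \<noteq> {}" "collinear e" using de by (auto simp: collinear_aff_dim)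
  then obtain a b where ab: "e = closed_segment a b"
    using compact_convex_collinear_segment pe polytope_imp_compact polytope_imp_convex by blast
  moreover have "a \<noteq> b" using ab de by auto
  ultimately show ?thesis using that by blast
qed

lemma polytope_edge_at_vertex:
  fixes S :: "'a::euclidean_space set"
  assumes "polytope S" "e edge_of S" "{v} face_of S" "v \<in> e"
  obtains w where "w \<noteq> v" "{w} face_of S" "e = closed_segment v w"
proof -
  obtain a b where ab: "a \<noteq> b" "e = closed_segment a b"
    using polytope_edge_segment assms(1,2) by blast
  have fe: "closed_segment a b face_of S" using assms(2) ab by (simp add: edge_of_def)
  have "v = a \<or> v = b" using vertex_in_segment_face[OF fe assms(3)] assms(4) ab(2) by simp
  then show ?thesis
  proof
    assume "v = a"
    then show ?thesis
      using that[of b] ab segment_face_of_imp_vertex(2)[OF fe] by simp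
  next
    assume "v = b"
    then show ?thesis
      using that[of a] ab segment_face_of_imp_vertex(1)[OF fe] by (simp add: closed_segment_commute)
  qed
qed

lemma polytope_face_has_vertex:
  fixes S :: "'a::euclidean_space set"
  assumes "polytope S" "F face_of S" "F \<noteq> {}"
  obtains x where "{x} face_of S" "x \<in> F"
proof -
  have "compact F" "convex F"
    using assms face_of_polytope_polytope polytope_imp_compact polytope_imp_convex by blast+
  then obtain x where "x extreme_point_of F" using extreme_point_exists_convex assms(3) by blast
  then have "x extreme_point_of S" "x \<in> F" using extreme_point_of_face[OF assms(2)] by auto
  then show ?thesis using that face_of_singleton by blast
qed

lemma polytope_face_hull_vertices:
  fixes S :: "'a::euclidean_space set"
  assumes "polytope S" "F face_of S"
  shows "F = convex hull {x. {x} face_of S \<and> x \<in> F}"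
proof -
  have "compact F" "convex F"
    using assms face_of_polytope_polytope polytope_imp_compact polytope_imp_convex by blast+
  then have "F = convex hull {x. x extreme_point_of F}" by (rule Krein_Milman_Minkowski)
  also have "{x. x extreme_point_of F} = {x. {x} face_of S \<and> x \<in> F}"
    using extreme_point_of_face[OF assms(2)] face_of_singleton by blast
  finally show ?thesis .
qed

lemma connected_closed_cover_propagate:
  fixes X :: "'a::topological_space set"
  assumes "connected X" "finite \<F>" "\<Union>\<F> = X"
    and closed_nonempty: "\<And>S. S \<in> \<F> \<Longrightarrow> closed S \<and> S \<noteq> {}"
    and step: "\<And>S T. S \<in> \<F> \<Longrightarrow> T \<in> \<F> \<Longrightarrow> S \<inter> T \<noteq> {} \<Longrightarrow> P S \<Longrightarrow> P T"
    and "S \<in> \<F>" "P S" "T \<in> \<F>"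
  shows "P T"
proof (rule ccontr)
  assume "\<not> P T"
  define A where "A = \<Union>{S\<in>\<F>. P S}"
  define B where "B = \<Union>{S\<in>\<F>. \<not> P S}"
  have "A \<inter> B \<noteq> {}"
  proof (rule connected_as_closed_union[OF assms(1)])
    show "X = A \<union> B" using assms(3) by (auto simp: A_def B_def)
    show "closed A" "closed B"
      using assms(2) closed_nonempty by (auto simp: A_def B_def)
    show "A \<noteq> {}" "B \<noteq> {}"
      using closed_nonempty assms(6-8) \<open>\<not> P T\<close> by (fastforce simp: A_def B_def)+
  qed
  then show False using step by (auto simp: A_def B_def)
qed

lemma polytope_low_dim_vertices_edge:
  fixes S :: "'a::euclidean_space set"
  assumes "polytope S" "aff_dim S \<le> 1" "{v} face_of S" "{w} face_of S" "v \<noteq> w"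
  shows "closed_segment v w edge_of S"
proof -
  have "convex S" "compact S" using assms(1) polytope_imp_convex polytope_imp_compact by blast+
  moreover have "S \<noteq> {}" using assms(3) face_of_imp_subset by blast
  moreover have "collinear S" using assms(2) by (simp add: collinear_aff_dim)
  ultimately obtain a b where ab: "S = closed_segment a b"
    using compact_convex_collinear_segment by blast
  have SS: "S face_of S" using \<open>convex S\<close> by (rule face_of_refl)
  have "v = a \<or> v = b" "w = a \<or> w = b"
    using vertex_in_segment_face[of a b S] SS assms(3,4) face_of_imp_subset ab by blast+
  then have "closed_segment v w = S" using ab assms(5) closed_segment_commute by blast
  moreover have "aff_dim (closed_segment v w) = 1"
    using assms(5) by (metis aff_dim_2 aff_dim_affine_hull affine_hull_closed_segment)
  ultimately show ?thesis using SS by (simp add: edge_of_def)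
qed

lemma singleton_face_of_face_iff:
  assumes "F face_of S"
  shows "{x} face_of F \<longleftrightarrow> {x} face_of S \<and> x \<in> F"
proof
  assume "{x} face_of F"
  then show "{x} face_of S \<and> x \<in> F" using assms face_of_trans face_of_imp_subset by blast
next
  assume "{x} face_of S \<and> x \<in> F"
  then show "{x} face_of F" using assms face_of_subset face_of_imp_subset by blast
qed

lemma edge_of_face_of:
  assumes "e edge_of F" "F face_of S"
  shows "e edge_of S"
  using assms face_of_trans[of e F S] by (simp add: edge_of_def)

text \<open>The facets cover the relative boundary, which is connected.\<close>

lemma polytope_facets_connected_induct:
  fixes S :: "'a::euclidean_space set"
  assumes "polytope S" "aff_dim S \<noteq> 1" "F0 facet_of S" "Q F0"
    and step: "\<And>F G x. F facet_of S \<Longrightarrow> G facet_of S \<Longrightarrow> {x} face_of S \<Longrightarrow> x \<in> F \<Longrightarrow> x \<in> G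
      \<Longrightarrow> Q F \<Longrightarrow> Q G"
    and "F facet_of S"
  shows "Q F"
proof (rule connected_closed_cover_propagate[of "rel_frontier S" "{F. F facet_of S}" Q F0])
  show "connected (rel_frontier S)"
    using assms(1,2)
    by (intro connected_sphere_gen) (simp_all add: polytope_imp_convex polytope_imp_bounded)
  show "finite {F. F facet_of S}" using assms(1) by (rule finite_polytope_facets)
  show "\<Union>{F. F facet_of S} = rel_frontier S"
    using assms(1) by (simp add: rel_frontier_of_polyhedron polytope_imp_polyhedron)
  show "closed G \<and> G \<noteq> {}" if "G \<in> {F. F facet_of S}" for G
    using that assms(1) by (simp add: facet_of_def face_of_polytope_polytope polytope_imp_closed)
  show "Q G'" if GG': "G \<in> {F. F facet_of S}" "G' \<in> {F. F facet_of S}" "G \<inter> G' \<noteq> {}"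
    and "Q G" for G G'
  proof -
    have "G \<inter> G' face_of S" using GG' by (simp add: face_of_Int facet_of_imp_face_of)
    then obtain x where "{x} face_of S" "x \<in> G" "x \<in> G'"
      using polytope_face_has_vertex assms(1) GG'(3) by blast
    then show ?thesis using step GG'(1,2) \<open>Q G\<close> by blast
  qed
qed (use assms(3,4,6) in simp_all)

theorem polytope_vertices_edge_induct:
  fixes S :: "'a::euclidean_space set"
  assumes "polytope S" "{v} face_of S" "P v"
    and "\<And>x y. closed_segment x y edge_of S \<Longrightarrow> P x \<Longrightarrow> P y"
    and "{w} face_of S"
  shows "P w"
  using assms
proof (induction "nat (aff_dim S)" arbitrary: S v w rule: less_induct)
  case less
  show ?case
  proof (cases "aff_dim S \<le> 1")
    case True
    show ?thesis
    proof (cases "v = w")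
      case False
      then have "closed_segment v w edge_of S"
        using polytope_low_dim_vertices_edge less.prems(1,2,5) True by blast
      then show ?thesis using less.prems(3,4) by blast
    qed (use less.prems(3) in simp)
  next
    case False
    define Q where "Q F \<longleftrightarrow> (\<forall>x. {x} face_of F \<longrightarrow> P x)" for F
    have facet_Q: "Q F" if F: "F facet_of S" "{x} face_of F" "P x" for F x
      unfolding Q_def
    proof (intro allI impI)
      fix y assume "{y} face_of F"
      show "P y"
      proof (rule less.hyps[OF _ _ F(2,3) _ \<open>{y} face_of F\<close>])
        show "nat (aff_dim F) < nat (aff_dim S)" using F(1) False by (simp add: facet_of_def)
        show "polytope F" using F(1) less.prems(1) face_of_polytope_polytope facet_of_imp_face_of by blast
        show "P b" if "closed_segment a b edge_of F" "P a" for a b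
          using less.prems(4) edge_of_face_of[OF that(1) facet_of_imp_face_of[OF F(1)]] that(2) .
      qed
    qed
    have in_facet: "\<exists>F. F facet_of S \<and> u \<in> F" if "{u} face_of S" for u
    proof -
      have "{u} \<noteq> S" using False by auto
      then show ?thesis using polytope_face_subset_facet[OF less.prems(1) that] by blast
    qed
    obtain F0 where F0: "F0 facet_of S" "v \<in> F0" using in_facet less.prems(2) by blast
    obtain F where F: "F facet_of S" "w \<in> F" using in_facet less.prems(5) by blast
    note vertex_iff = singleton_face_of_face_iff[OF facet_of_imp_face_of]
    have "Q F"
    proof (rule polytope_facets_connected_induct[OF less.prems(1) _ F0(1) _ _ F(1)])
      show "aff_dim S \<noteq> 1" using False by simp
      show "Q F0" using facet_Q F0 less.prems(2,3) vertex_iff by blast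
      show "Q G" if "G' facet_of S" "G facet_of S" "{x} face_of S" "x \<in> G'" "x \<in> G" "Q G'"
        for G' G x
        using that facet_Q[of G x] vertex_iff unfolding Q_def by blast
    qed
    then show ?thesis using Q_def vertex_iff F less.prems(5) by blast
  qed
qed

lemma face_of_aff_dim_eq:
  fixes S :: "'a::euclidean_space set"
  assumes "convex S" "T face_of S" "aff_dim T = aff_dim S"
  shows "T = S"
  using face_of_aff_dim_lt[OF assms(1,2)] assms(3) by fastforce

lemma polytope_2face_vertex_two_edges:
  fixes S :: "'a::euclidean_space set"
  assumes "polytope S" "H face_of S" "aff_dim H = 2" "{v} face_of S" "v \<in> H"
  obtains e e' where "e edge_of S" "e' edge_of S" "e \<noteq> e'" "v \<in> e" "v \<in> e'" "e \<subseteq> H" "e' \<subseteq> H"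
proof -
  have "polytope H" using assms(1,2) by (rule face_of_polytope_polytope)
  moreover have "{v} face_of H"
    using face_of_subset[OF assms(4) _ face_of_imp_subset[OF assms(2)]] assms(5) by simp
  moreover have "aff_dim {v} < aff_dim H - 1" using assms(3) by simp
  ultimately obtain e e' where ee': "e facet_of H" "e' facet_of H" "e \<noteq> e'" "{v} \<subseteq> e" "{v} \<subseteq> e'"
    using polytope_face_subset_two_facets by blast
  have "e edge_of S" "e' edge_of S"
    using ee'(1,2) assms(2,3) face_of_trans[of _ H S] by (auto simp: facet_of_def edge_of_def)
  then show ?thesis using that ee' facet_of_imp_subset by blast
qed

lemma faces_eq_if_two_common_codim1_faces:
  fixes S :: "'a::euclidean_space set"
  assumes "convex S" "H face_of S" "H' face_of S" "aff_dim H' = aff_dim H"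
    and "e face_of S" "e' face_of S" "e \<noteq> e'" "aff_dim e = aff_dim H - 1" "aff_dim e' = aff_dim H - 1"
    and "e \<subseteq> H \<inter> H'" "e' \<subseteq> H \<inter> H'"
  shows "H = H'"
proof -
  have I: "H \<inter> H' face_of S" using assms(2,3) by (rule face_of_Int)
  have "e face_of H \<inter> H'" "e' face_of H \<inter> H'"
    using face_of_subset[OF assms(5,10) face_of_imp_subset[OF I]]
      face_of_subset[OF assms(6,11) face_of_imp_subset[OF I]] .
  then have "aff_dim (H \<inter> H') \<noteq> aff_dim H - 1"
    using face_of_aff_dim_eq[OF face_of_imp_convex[OF I]] assms(7-9) by metis
  moreover have "aff_dim (H \<inter> H') \<ge> aff_dim H - 1" using aff_dim_subset[OF assms(10)] assms(8) by simp
  moreover have "aff_dim (H \<inter> H') \<le> aff_dim H" using aff_dim_subset[of "H \<inter> H'" H] by simp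
  ultimately have "aff_dim (H \<inter> H') = aff_dim H" "aff_dim (H \<inter> H') = aff_dim H'"
    using assms(4) by linarith+
  moreover have "H \<inter> H' face_of H" "H \<inter> H' face_of H'"
    using face_of_subset[OF I] face_of_imp_subset[OF assms(2)] face_of_imp_subset[OF assms(3)] by auto
  moreover have "convex H" "convex H'" using assms(2,3) face_of_imp_convex by blast+
  ultimately have "H \<inter> H' = H" "H \<inter> H' = H'" using face_of_aff_dim_eq by blast+
  then show ?thesis by simp
qed

lemma edges_at_vertex_affine_independent:
  fixes S :: "'a::euclidean_space set"
  assumes "convex S" "closed_segment v a edge_of S" "closed_segment v b edge_of S"
    and "closed_segment v a \<noteq> closed_segment v b"
  shows "\<not> affine_dependent {v, a, b}"
proof
  assume "affine_dependent {v, a, b}"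
  moreover have "v \<noteq> a" using assms(2) by (auto simp: edge_of_def)
  ultimately have "b \<in> affine hull {v, a}"
    using collinear_3_eq_affine_dependent collinear_3_affine_hull by blast
  then have "closed_segment v b \<subseteq> affine hull (closed_segment v a)"
    using closed_segment_subset[OF hull_inc[of v] _ affine_imp_convex[OF affine_affine_hull]] by simp
  moreover have "closed_segment v a = affine hull (closed_segment v a) \<inter> S"
    using face_of_imp_eq_affine_Int[OF assms(1)] assms(2) unfolding edge_of_def by blast
  ultimately have "closed_segment v b \<subseteq> closed_segment v a"
    using assms(3) edge_of_imp_subset by blast
  then have "closed_segment v b face_of closed_segment v a"
    using face_of_subset[OF _ _ edge_of_imp_subset[OF assms(2)]] assms(3) by (simp add: edge_of_def)
  then have "closed_segment v b = closed_segment v a"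
    by (rule face_of_aff_dim_eq[OF convex_closed_segment]) (use assms(2,3) in \<open>simp add: edge_of_def\<close>)
  then show False using assms(4) by simp
qed

section \<open>Simple polytopes of dimension three\<close>

locale simple_polytope3 =
  fixes K :: "'a::euclidean_space set"
  assumes polytope: "polytope K" and aff_dim: "aff_dim K = 3"
    and simple: "\<And>v. {v} face_of K \<Longrightarrow> card {e. e edge_of K \<and> v \<in> e} = 3"
begin

lemma convex: "convex K"
  using polytope by (rule polytope_imp_convex)

lemma facet_iff: "F facet_of K \<longleftrightarrow> F face_of K \<and> aff_dim F = 2"
  using aff_dim by (auto simp: facet_of_def)

lemma edge_in_two_facets:
  assumes "e edge_of K"
  obtains F G where "F facet_of K" "G facet_of K" "F \<noteq> G" "e \<subseteq> F" "e \<subseteq> G"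
proof -
  have "e face_of K" "e \<noteq> {}" "aff_dim e < aff_dim K - 1"
    using assms aff_dim by (auto simp: edge_of_def)
  then show ?thesis using polytope_face_subset_two_facets[OF polytope] that by blast
qed

lemma facet_vertex_two_edges:
  assumes "H facet_of K" "{v} face_of K" "v \<in> H"
  obtains e e' where "e edge_of K" "e' edge_of K" "e \<noteq> e'" "v \<in> e" "v \<in> e'" "e \<subseteq> H" "e' \<subseteq> H"
  using polytope_2face_vertex_two_edges[OF polytope _ _ assms(2,3)] assms(1) facet_iff by blast

lemma facets_eq_if_common_edges:
  assumes "H facet_of K" "H' facet_of K" "e edge_of K" "e' edge_of K" "e \<noteq> e'"
    and "e \<subseteq> H \<inter> H'" "e' \<subseteq> H \<inter> H'"
  shows "H = H'"
proof (rule faces_eq_if_two_common_codim1_faces[OF convex _ _ _ _ _ assms(5) _ _ assms(6,7)])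
  show "H face_of K" "H' face_of K" using assms(1,2) by (simp_all add: facet_of_imp_face_of)
  show "aff_dim H' = aff_dim H" "aff_dim e = aff_dim H - 1" "aff_dim e' = aff_dim H - 1"
    using assms(1-4) facet_iff by (auto simp: edge_of_def)
  show "e face_of K" "e' face_of K" using assms(3,4) by (simp_all add: edge_of_def)
qed

lemma edges_at_vertex_eq:
  assumes "{v} face_of K" "e1 edge_of K" "e2 edge_of K" "e3 edge_of K" "v \<in> e1" "v \<in> e2" "v \<in> e3"
    and "e1 \<noteq> e2" "e1 \<noteq> e3" "e2 \<noteq> e3"
  shows "{e. e edge_of K \<and> v \<in> e} = {e1, e2, e3}"
proof -
  have "card {e. e edge_of K \<and> v \<in> e} = 3" using simple[OF assms(1)] .
  then have "finite {e. e edge_of K \<and> v \<in> e}" by (intro card_ge_0_finite) simp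
  moreover have "{e1, e2, e3} \<subseteq> {e. e edge_of K \<and> v \<in> e}" using assms(2-7) by blast
  moreover have "card {e1, e2, e3} = card {e. e edge_of K \<and> v \<in> e}"
    using assms(8-10) simple[OF assms(1)] by simp
  ultimately show ?thesis by (metis card_subset_eq)
qed

lemma facet_through_two_edges_at_vertex:
  assumes "{v} face_of K" "e1 edge_of K" "e2 edge_of K" "e3 edge_of K" "v \<in> e1" "v \<in> e2" "v \<in> e3"
    and "e1 \<noteq> e2" "e1 \<noteq> e3" "e2 \<noteq> e3"
  obtains F where "F facet_of K" "e1 \<subseteq> F" "e2 \<subseteq> F" "\<not> e3 \<subseteq> F"
proof -
  have edges: "{e. e edge_of K \<and> v \<in> e} = {e1, e2, e3}" using edges_at_vertex_eq assms by blast
  have other: "e2 \<subseteq> X \<or> e3 \<subseteq> X" if X: "X facet_of K" "e1 \<subseteq> X" for X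
  proof -
    obtain f f' where f: "f edge_of K" "f' edge_of K" "f \<noteq> f'" "v \<in> f" "v \<in> f'" "f \<subseteq> X" "f' \<subseteq> X"
      using facet_vertex_two_edges[OF X(1) assms(1)] X(2) assms(5) by blast
    then have "f \<in> {e1, e2, e3}" "f' \<in> {e1, e2, e3}" using edges by blast+
    then show ?thesis using f(3,6,7) by blast
  qed
  obtain F G where FG: "F facet_of K" "G facet_of K" "F \<noteq> G" "e1 \<subseteq> F" "e1 \<subseteq> G"
    using edge_in_two_facets assms(2) by blast
  have not_common: "\<not> (e \<subseteq> F \<and> e \<subseteq> G)" if "e edge_of K" "e1 \<noteq> e" for e
  proof
    assume "e \<subseteq> F \<and> e \<subseteq> G"
    then have "F = G" using facets_eq_if_common_edges[OF FG(1,2) assms(2) that] FG(4,5) by blast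
    then show False using FG(3) by simp
  qed
  show ?thesis
  proof (cases "e2 \<subseteq> F")
    case True
    then have "\<not> e2 \<subseteq> G" using not_common[OF assms(3,8)] by blast
    then have "e3 \<subseteq> G" using other[OF FG(2,5)] by blast
    then have "\<not> e3 \<subseteq> F" using not_common[OF assms(4,9)] by blast
    then show ?thesis using that FG(1,4) True by blast
  next
    case False
    then have "e3 \<subseteq> F" using other[OF FG(1,4)] by blast
    then have "\<not> e3 \<subseteq> G" using not_common[OF assms(4,9)] by blast
    then have "e2 \<subseteq> G" using other[OF FG(2,5)] by blast
    then show ?thesis using that FG(2,5) \<open>\<not> e3 \<subseteq> G\<close> by blast
  qed
qed

lemma two_edges_at_vertex_common_facet:
  assumes "{v} face_of K" "e edge_of K" "e' edge_of K" "e \<noteq> e'" "v \<in> e" "v \<in> e'"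
  obtains F where "F facet_of K" "e \<subseteq> F" "e' \<subseteq> F"
proof -
  have "\<not> {e. e edge_of K \<and> v \<in> e} \<subseteq> {e, e'}"
  proof
    assume "{e. e edge_of K \<and> v \<in> e} \<subseteq> {e, e'}"
    then have "card {e. e edge_of K \<and> v \<in> e} \<le> card {e, e'}" by (simp add: card_mono)
    then show False using simple[OF assms(1)] assms(4) by simp
  qed
  then obtain e'' where e'': "e'' edge_of K" "v \<in> e''" "e \<noteq> e''" "e' \<noteq> e''" by blast
  show ?thesis
    using facet_through_two_edges_at_vertex[OF assms(1-3) e''(1) assms(5,6) e''(2) assms(4) e''(3,4)] that
    by blast
qed

lemma simple_vertex_affine_independent:
  assumes "{v} face_of K"
    and "closed_segment v a1 edge_of K" "closed_segment v a2 edge_of K" "closed_segment v a3 edge_of K"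
    and "closed_segment v a1 \<noteq> closed_segment v a2" "closed_segment v a1 \<noteq> closed_segment v a3"
    and "closed_segment v a2 \<noteq> closed_segment v a3"
  shows "\<not> affine_dependent {v, a1, a2, a3}"
proof -
  obtain F where F: "F facet_of K" "closed_segment v a1 \<subseteq> F" "closed_segment v a2 \<subseteq> F"
    and not_e3: "\<not> closed_segment v a3 \<subseteq> F"
    using facet_through_two_edges_at_vertex[OF assms(1-4) _ _ _ assms(5-7)] by auto
  have "a3 \<notin> affine hull F"
  proof
    assume "a3 \<in> affine hull F"
    moreover have "a3 \<in> K" using assms(4) edge_of_imp_subset by fastforce
    ultimately have "a3 \<in> F"
      using face_of_imp_eq_affine_Int[OF convex facet_of_imp_face_of[OF F(1)]] by blast
    moreover have "v \<in> F" using F(2) by auto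
    moreover have "convex F" using face_of_imp_convex[OF facet_of_imp_face_of[OF F(1)]] .
    ultimately show False using not_e3 closed_segment_subset by blast
  qed
  moreover have "affine hull {v, a1, a2} \<subseteq> affine hull F"
    using F(2,3) by (intro hull_mono) auto
  ultimately have "a3 \<notin> affine hull {v, a1, a2}" by blast
  then have "\<not> affine_dependent (insert a3 {v, a1, a2})"
    using affine_independent_insert edges_at_vertex_affine_independent[OF convex assms(2,3,5)] by blast
  then show ?thesis by (simp add: insert_commute)
qed

lemma simple_vertex_neighbours:
  assumes v: "{v} face_of K"
  obtains a1 a2 a3 where
    "{e. e edge_of K \<and> v \<in> e} = {closed_segment v a1, closed_segment v a2, closed_segment v a3}"
    "closed_segment v a1 edge_of K" "closed_segment v a2 edge_of K" "closed_segment v a3 edge_of K"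
    "closed_segment v a1 \<noteq> closed_segment v a2" "closed_segment v a1 \<noteq> closed_segment v a3"
    "closed_segment v a2 \<noteq> closed_segment v a3"
    "{a1} face_of K" "{a2} face_of K" "{a3} face_of K"
    "\<not> affine_dependent {v, a1, a2, a3}" "card {v, a1, a2, a3} = 4"
proof -
  obtain e1 e2 e3 where edges: "{e. e edge_of K \<and> v \<in> e} = {e1, e2, e3}"
    and d: "e1 \<noteq> e2" "e1 \<noteq> e3" "e2 \<noteq> e3"
    using simple[OF v] unfolding card_3_iff by blast
  have e: "e1 edge_of K" "v \<in> e1" "e2 edge_of K" "v \<in> e2" "e3 edge_of K" "v \<in> e3"
    using edges by blast+
  obtain a1 where a1: "a1 \<noteq> v" "{a1} face_of K" "e1 = closed_segment v a1"
    using polytope_edge_at_vertex[OF polytope e(1) v e(2)] by blast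
  obtain a2 where a2: "a2 \<noteq> v" "{a2} face_of K" "e2 = closed_segment v a2"
    using polytope_edge_at_vertex[OF polytope e(3) v e(4)] by blast
  obtain a3 where a3: "a3 \<noteq> v" "{a3} face_of K" "e3 = closed_segment v a3"
    using polytope_edge_at_vertex[OF polytope e(5) v e(6)] by blast
  have "a1 \<noteq> a2" "a1 \<noteq> a3" "a2 \<noteq> a3" using d a1 a2 a3 by auto
  then have "card {v, a1, a2, a3} = 4" using a1 a2 a3 by auto
  moreover have "\<not> affine_dependent {v, a1, a2, a3}"
    using simple_vertex_affine_independent[OF v] e a1 a2 a3 d by simp
  moreover note edges e(1,3,5) d
  ultimately show ?thesis
    using that[OF _ _ _ _ _ _ _ a1(2) a2(2) a3(2)] unfolding a1(3) a2(3) a3(3) by blast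
qed

end

section \<open>Affine combinations and affine maps\<close>

lemma norm_diff_affine_combination3:
  fixes p y1 y2 y3 :: "'a::real_inner"
  assumes "l1 + l2 + l3 = 1"
  shows "(norm (p - (l1 *\<^sub>R y1 + l2 *\<^sub>R y2 + l3 *\<^sub>R y3)))\<^sup>2 =
    l1 * (norm (p - y1))\<^sup>2 + l2 * (norm (p - y2))\<^sup>2 + l3 * (norm (p - y3))\<^sup>2
    - (l1 * l2 * (norm (y1 - y2))\<^sup>2 + l1 * l3 * (norm (y1 - y3))\<^sup>2 + l2 * l3 * (norm (y2 - y3))\<^sup>2)"
proof -
  have l3: "l3 = 1 - l1 - l2" using assms by simp
  show ?thesis unfolding l3
    by (simp add: power2_norm_eq_inner inner_diff_left inner_diff_right inner_add_left
        inner_add_right inner_commute algebra_simps)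
qed

text \<open>The distance of a point from an affine combination of three points is determined by the
  mutual distances of the four points.\<close>

lemma dist_preserving_affine_combination3_iff:
  fixes f :: "'a::real_inner \<Rightarrow> 'b::real_inner"
  assumes "\<forall>x\<in>S. \<forall>y\<in>S. dist (f x) (f y) = dist x y"
    and "p \<in> S" "y1 \<in> S" "y2 \<in> S" "y3 \<in> S" "l1 + l2 + l3 = 1"
  shows "f p = l1 *\<^sub>R f y1 + l2 *\<^sub>R f y2 + l3 *\<^sub>R f y3 \<longleftrightarrow> p = l1 *\<^sub>R y1 + l2 *\<^sub>R y2 + l3 *\<^sub>R y3"
proof -
  have "norm (f x - f y) = norm (x - y)" if "x \<in> S" "y \<in> S" for x y
    using assms(1) that by (simp add: dist_norm)
  then have "(norm (f p - (l1 *\<^sub>R f y1 + l2 *\<^sub>R f y2 + l3 *\<^sub>R f y3)))\<^sup>2 =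
      (norm (p - (l1 *\<^sub>R y1 + l2 *\<^sub>R y2 + l3 *\<^sub>R y3)))\<^sup>2"
    unfolding norm_diff_affine_combination3[OF assms(6)] using assms(2-5) by simp
  then have "norm (f p - (l1 *\<^sub>R f y1 + l2 *\<^sub>R f y2 + l3 *\<^sub>R f y3)) =
      norm (p - (l1 *\<^sub>R y1 + l2 *\<^sub>R y2 + l3 *\<^sub>R y3))" by simp
  then show ?thesis by (metis norm_eq_zero right_minus_eq)
qed

lemma matrix_affine_combination3:
  fixes M :: "real^'n^'m"
  assumes "l1 + l2 + l3 = 1"
  shows "M *v (l1 *\<^sub>R x1 + l2 *\<^sub>R x2 + l3 *\<^sub>R x3) + c =
     l1 *\<^sub>R (M *v x1 + c) + l2 *\<^sub>R (M *v x2 + c) + l3 *\<^sub>R (M *v x3 + c)"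
proof -
  have "c = l1 *\<^sub>R c + l2 *\<^sub>R c + l3 *\<^sub>R c"
    using assms by (metis scaleR_add_left scaleR_one)
  then show ?thesis
    by (simp add: matrix_vector_right_distrib matrix_vector_mult_scaleR algebra_simps)
qed

lemma affine_basis_differences_span:
  fixes v a1 a2 a3 :: "real^3"
  assumes "\<not> affine_dependent {v, a1, a2, a3}" "card {v, a1, a2, a3} = 4"
  shows "independent {a1 - v, a2 - v, a3 - v}" "card {a1 - v, a2 - v, a3 - v} = 3"
    and "span {a1 - v, a2 - v, a3 - v} = UNIV"
proof -
  have d: "v \<noteq> a1" "v \<noteq> a2" "v \<noteq> a3" "a1 \<noteq> a2" "a1 \<noteq> a3" "a2 \<noteq> a3"
    using assms(2) by (auto simp: card_insert_if split: if_splits)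
  have "(\<lambda>x. - v + x) ` {a1, a2, a3} = {a1 - v, a2 - v, a3 - v}" by auto
  then show indep: "independent {a1 - v, a2 - v, a3 - v}"
    using affine_dependent_iff_dependent[of v "{a1, a2, a3}"] assms(1) d by simp
  show card: "card {a1 - v, a2 - v, a3 - v} = 3" using d by auto
  have "UNIV \<subseteq> span {a1 - v, a2 - v, a3 - v}"
    by (rule card_ge_dim_independent) (use indep card in auto)
  then show "span {a1 - v, a2 - v, a3 - v} = UNIV" by auto
qed

lemma affine_map_between_affine_bases3:
  fixes v a1 a2 a3 p b1 b2 b3 :: "real^3"
  assumes A: "\<not> affine_dependent {v, a1, a2, a3}" "card {v, a1, a2, a3} = 4"
    and B: "\<not> affine_dependent {p, b1, b2, b3}" "card {p, b1, b2, b3} = 4"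
  obtains M c where "invertible M" "M *v v + c = p"
    "M *v a1 + c = b1" "M *v a2 + c = b2" "M *v a3 + c = b3"
proof -
  note bA = affine_basis_differences_span[OF A] and bB = affine_basis_differences_span[OF B]
  have d: "a1 - v \<noteq> a2 - v" "a1 - v \<noteq> a3 - v" "a2 - v \<noteq> a3 - v"
    using bA(2) by (auto simp: card_insert_if split: if_splits)
  define f where "f x = (if x = a1 - v then b1 - p else if x = a2 - v then b2 - p else b3 - p)" for x
  obtain g where g: "linear g" "\<forall>x\<in>{a1 - v, a2 - v, a3 - v}. g x = f x"
    using linear_independent_extend[OF bA(1)] by blast
  then have g_image: "g ` {a1 - v, a2 - v, a3 - v} = {b1 - p, b2 - p, b3 - p}"
    using d by (auto simp: f_def)
  have "surj g"
    using span_linear_image[OF g(1), of "{a1 - v, a2 - v, a3 - v}"] bA(3) bB(3) g_image by simp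
  then have "surj ((*v) (matrix g))" using matrix_vector_mul(2)[OF g(1)] by metis
  then have "invertible (matrix g)"
    using matrix_right_invertible_surjective invertible_right_inverse by blast
  moreover have "matrix g *v x = g x" for x using matrix_vector_mul(2)[OF g(1)] by metis
  moreover have "g (a - v) = g a - g v" for a using linear_diff[OF g(1)] .
  ultimately show ?thesis
    using that[of "matrix g" "p - g v"] g d by (auto simp: f_def algebra_simps)
qed

lemma affine_image_convex_hull:
  fixes M :: "real^'n^'m"
  shows "(\<lambda>x. M *v x + c) ` (convex hull S) = convex hull ((\<lambda>x. M *v x + c) ` S)"
proof -
  have "(\<lambda>x. M *v x + c) ` T = (\<lambda>y. c + y) ` ((*v) M ` T)" for T
    by (auto simp: image_image add.commute)
  then show ?thesis
    by (simp add: convex_hull_linear_image[OF matrix_vector_mul_linear] convex_hull_translation)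
qed

section \<open>Polyhedra with facewise affine-equivalent developments\<close>

locale facewise_affine_developments =
  fixes K K' :: "(real^3) set"
    and \<phi> :: "(real^3) set \<Rightarrow> (real^3) set"
    and dev dev' :: "(real^3) set \<Rightarrow> real^3 \<Rightarrow> real^2"
  assumes simple: "simple_polyhedron K" "simple_polyhedron K'"
    and comb_equiv: "comb_equiv K K' \<phi>"
    and developments: "natural_development K dev" "natural_development K' dev'"
    and facewise: "developments_facewise_affine_equiv K dev K' dev' \<phi>"
begin

sublocale K: simple_polytope3 K
  using simple(1)
  by unfold_locales (auto simp: simple_polyhedron_def convex_polyhedron3_def is_vertex_def)

sublocale K': simple_polytope3 K'
  using simple(2)
  by unfold_locales (auto simp: simple_polyhedron_def convex_polyhedron3_def is_vertex_def)

definition \<psi> :: "real^3 \<Rightarrow> real^3" where "\<psi> u = the_elem (\<phi> {u})"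

lemma \<phi>_bij: "bij_betw \<phi> (cells K) (cells K')"
  and aff_dim_\<phi>: "F \<in> cells K \<Longrightarrow> aff_dim (\<phi> F) = aff_dim F"
  and \<phi>_subset_iff: "F \<in> cells K \<Longrightarrow> G \<in> cells K \<Longrightarrow> \<phi> F \<subseteq> \<phi> G \<longleftrightarrow> F \<subseteq> G"
  using comb_equiv by (auto simp: comb_equiv_def)

lemma vertex_in_cells: "{u} face_of K \<Longrightarrow> {u} \<in> cells K"
  by (simp add: cells_def)

lemma edge_in_cells: "e edge_of K \<Longrightarrow> e \<in> cells K"
  by (simp add: cells_def edge_of_def)

lemma facet_in_cells: "F facet_of K \<Longrightarrow> F \<in> cells K"
  by (simp add: cells_def K.facet_iff)

lemma \<phi>_cell: "G \<in> cells K \<Longrightarrow> \<phi> G \<in> cells K'"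
  using \<phi>_bij bij_betwE by blast

lemma \<phi>_vertex:
  assumes "{u} face_of K"
  shows "\<phi> {u} = {\<psi> u}" "{\<psi> u} face_of K'"
proof -
  have "aff_dim (\<phi> {u}) = 0" using aff_dim_\<phi> vertex_in_cells[OF assms] by simp
  then obtain x where "\<phi> {u} = {x}" using aff_dim_eq_0 by blast
  then show "\<phi> {u} = {\<psi> u}" by (simp add: \<psi>_def)
  then show "{\<psi> u} face_of K'" using \<phi>_cell[OF vertex_in_cells[OF assms]] by (simp add: cells_def)
qed

lemma \<phi>_edge: "e edge_of K \<Longrightarrow> \<phi> e edge_of K'"
  using \<phi>_cell edge_in_cells aff_dim_\<phi> by (simp add: cells_def edge_of_def)

lemma \<phi>_facet: "F facet_of K \<Longrightarrow> \<phi> F facet_of K'"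
  using \<phi>_cell facet_in_cells aff_dim_\<phi> by (simp add: cells_def K.facet_iff K'.facet_iff)

lemma \<phi>_inj: "F \<in> cells K \<Longrightarrow> G \<in> cells K \<Longrightarrow> \<phi> F = \<phi> G \<Longrightarrow> F = G"
  using \<phi>_bij by (auto simp: bij_betw_def inj_on_def)

lemma \<psi>_mem_iff:
  assumes "{u} face_of K" "G \<in> cells K"
  shows "\<psi> u \<in> \<phi> G \<longleftrightarrow> u \<in> G"
  using \<phi>_subset_iff[OF vertex_in_cells[OF assms(1)] assms(2)] \<phi>_vertex[OF assms(1)] by simp

lemma inj_on_\<psi>: "inj_on \<psi> {u. {u} face_of K}"
  unfolding inj_on_def
  using \<phi>_inj[OF vertex_in_cells vertex_in_cells] \<phi>_vertex by (metis mem_Collect_eq singleton_inject)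

lemma \<psi>_surj:
  assumes "{x} face_of K'"
  obtains u where "{u} face_of K" "x = \<psi> u"
proof -
  have "{x} \<in> cells K'" by (simp add: cells_def assms)
  then obtain G where G: "G \<in> cells K" "\<phi> G = {x}"
    using \<phi>_bij by (metis bij_betw_imp_surj_on imageE)
  then have "aff_dim G = 0" using aff_dim_\<phi>[OF G(1)] by simp
  then obtain u where "G = {u}" using aff_dim_eq_0 by blast
  then show ?thesis using that G \<phi>_vertex[of u] by (auto simp: cells_def)
qed

lemma \<phi>_segment:
  assumes e: "closed_segment v a edge_of K"
  shows "\<phi> (closed_segment v a) = closed_segment (\<psi> v) (\<psi> a)"
proof -
  have fe: "closed_segment v a face_of K" using e by (simp add: edge_of_def)
  obtain p q where pq: "p \<noteq> q" "\<phi> (closed_segment v a) = closed_segment p q"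
    using polytope_edge_segment[OF K'.polytope \<phi>_edge[OF e]] by blast
  have fe': "closed_segment p q face_of K'" using \<phi>_edge[OF e] pq by (simp add: edge_of_def)
  have endpoint: "x = \<psi> v \<or> x = \<psi> a" if x: "{x} face_of K'" "x \<in> closed_segment p q" for x
  proof -
    obtain u where u: "{u} face_of K" "x = \<psi> u" using \<psi>_surj x(1) by blast
    then have "u \<in> closed_segment v a" using \<psi>_mem_iff[OF u(1) edge_in_cells[OF e]] pq x(2) by simp
    then have "u = v \<or> u = a" using vertex_in_segment_face[OF fe u(1)] by blast
    then show ?thesis using u by blast
  qed
  have "p = \<psi> v \<or> p = \<psi> a" "q = \<psi> v \<or> q = \<psi> a"
    using endpoint segment_face_of_imp_vertex[OF fe'] by auto
  then show ?thesis using pq by (auto simp: closed_segment_commute)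
qed

lemma facet_development_affine:
  assumes "F facet_of K"
  obtains M :: "real^2^2" and c where
    "\<And>x. {x} face_of K \<Longrightarrow> x \<in> F \<Longrightarrow> M *v dev F x + c = dev' (\<phi> F) (\<psi> x)"
proof -
  have "\<exists>A. nondeg_affine A \<and> A ` (dev F ` F) = dev' (\<phi> F) ` (\<phi> F) \<and>
      (\<forall>G\<in>cells K. G \<subseteq> F \<longrightarrow> A ` (dev F ` G) = dev' (\<phi> F) ` (\<phi> G))"
    using facewise assms unfolding developments_facewise_affine_equiv_def by (elim allE impE)
  then obtain A where A: "nondeg_affine A"
    "\<And>G. G \<in> cells K \<Longrightarrow> G \<subseteq> F \<Longrightarrow> A ` (dev F ` G) = dev' (\<phi> F) ` (\<phi> G)"
    by (elim exE conjE) simp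
  then obtain M c where MA: "A = (\<lambda>x. M *v x + c)" unfolding nondeg_affine_def by (elim exE conjE)
  have "M *v dev F x + c = dev' (\<phi> F) (\<psi> x)" if x: "{x} face_of K" "x \<in> F" for x
    using A(2)[OF vertex_in_cells[OF x(1)]] x(2) \<phi>_vertex(1)[OF x(1)] MA by simp
  then show ?thesis using that by blast
qed

lemma \<psi>_affine_combination:
  assumes F: "F facet_of K"
    and vertices: "{u1} face_of K" "{u2} face_of K" "{u3} face_of K" "{u} face_of K"
    and in_F: "u1 \<in> F" "u2 \<in> F" "u3 \<in> F" "u \<in> F"
    and l: "l1 + l2 + l3 = 1" and u: "u = l1 *\<^sub>R u1 + l2 *\<^sub>R u2 + l3 *\<^sub>R u3"
  shows "\<psi> u = l1 *\<^sub>R \<psi> u1 + l2 *\<^sub>R \<psi> u2 + l3 *\<^sub>R \<psi> u3"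
proof -
  obtain M c where M: "\<And>x. {x} face_of K \<Longrightarrow> x \<in> F \<Longrightarrow> M *v dev F x + c = dev' (\<phi> F) (\<psi> x)"
    using facet_development_affine[OF F] by blast
  have iso: "\<forall>x\<in>F. \<forall>y\<in>F. dist (dev F x) (dev F y) = dist x y"
    using developments(1) F unfolding natural_development_def by simp
  have iso': "\<forall>x\<in>\<phi> F. \<forall>y\<in>\<phi> F. dist (dev' (\<phi> F) x) (dev' (\<phi> F) y) = dist x y"
    using developments(2) \<phi>_facet[OF F] unfolding natural_development_def by simp
  have "dev F u = l1 *\<^sub>R dev F u1 + l2 *\<^sub>R dev F u2 + l3 *\<^sub>R dev F u3"
    using dist_preserving_affine_combination3_iff[OF iso in_F(4,1-3) l] u by simp
  then have "M *v dev F u + c =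
      l1 *\<^sub>R (M *v dev F u1 + c) + l2 *\<^sub>R (M *v dev F u2 + c) + l3 *\<^sub>R (M *v dev F u3 + c)"
    using matrix_affine_combination3[OF l] by simp
  then have "dev' (\<phi> F) (\<psi> u) =
      l1 *\<^sub>R dev' (\<phi> F) (\<psi> u1) + l2 *\<^sub>R dev' (\<phi> F) (\<psi> u2) + l3 *\<^sub>R dev' (\<phi> F) (\<psi> u3)"
    using M vertices in_F by simp
  moreover have "\<psi> u \<in> \<phi> F" "\<psi> u1 \<in> \<phi> F" "\<psi> u2 \<in> \<phi> F" "\<psi> u3 \<in> \<phi> F"
    using \<psi>_mem_iff[OF _ facet_in_cells[OF F]] vertices in_F by simp_all
  ultimately show ?thesis using dist_preserving_affine_combination3_iff[OF iso'] l by simp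
qed

lemma affine_agrees_on_facet:
  assumes F: "F facet_of K"
    and vertices: "{u1} face_of K" "{u2} face_of K" "{u3} face_of K" "{u} face_of K"
    and in_F: "u1 \<in> F" "u2 \<in> F" "u3 \<in> F" "u \<in> F"
    and indep: "\<not> affine_dependent {u1, u2, u3}" and card: "card {u1, u2, u3} = 3"
    and agree: "M *v u1 + c = \<psi> u1" "M *v u2 + c = \<psi> u2" "M *v u3 + c = \<psi> u3"
  shows "M *v u + c = \<psi> u"
proof -
  have "aff_dim {u1, u2, u3} = 2" using aff_dim_affine_independent[OF indep] card by simp
  moreover have "aff_dim F = 2" using F K.facet_iff by blast
  moreover have "affine hull {u1, u2, u3} \<subseteq> affine hull F" using in_F by (intro hull_mono) auto
  ultimately have "affine hull {u1, u2, u3} = affine hull F"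
    by (intro affine_dim_equal) auto
  then have "u \<in> affine hull {u1, u2, u3}" using hull_inc[OF in_F(4)] by simp
  then obtain l1 l2 l3 where l: "l1 + l2 + l3 = 1" and u: "u = l1 *\<^sub>R u1 + l2 *\<^sub>R u2 + l3 *\<^sub>R u3"
    unfolding affine_hull_3 by auto
  have "M *v u + c = l1 *\<^sub>R (M *v u1 + c) + l2 *\<^sub>R (M *v u2 + c) + l3 *\<^sub>R (M *v u3 + c)"
    unfolding u by (rule matrix_affine_combination3[OF l])
  also have "\<dots> = \<psi> u" using \<psi>_affine_combination[OF F vertices in_F l u] agree by simp
  finally show ?thesis .
qed

definition agrees_at_star :: "real^3^3 \<Rightarrow> real^3 \<Rightarrow> real^3 \<Rightarrow> bool" where
  "agrees_at_star M c v \<longleftrightarrow>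
     (\<forall>w. w = v \<or> closed_segment v w edge_of K \<longrightarrow> M *v w + c = \<psi> w)"

lemma agrees_at_star_exists:
  assumes v: "{v} face_of K"
  obtains M c where "invertible M" "agrees_at_star M c v"
proof -
  obtain a1 a2 a3 where
    edges: "{e. e edge_of K \<and> v \<in> e} = {closed_segment v a1, closed_segment v a2, closed_segment v a3}"
    and e: "closed_segment v a1 edge_of K" "closed_segment v a2 edge_of K" "closed_segment v a3 edge_of K"
    and d: "closed_segment v a1 \<noteq> closed_segment v a2" "closed_segment v a1 \<noteq> closed_segment v a3"
      "closed_segment v a2 \<noteq> closed_segment v a3"
    and a: "{a1} face_of K" "{a2} face_of K" "{a3} face_of K"
    and indep: "\<not> affine_dependent {v, a1, a2, a3}" and card: "card {v, a1, a2, a3} = 4"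
    using K.simple_vertex_neighbours[OF v] by blast
  have "\<phi> (closed_segment v a1) \<noteq> \<phi> (closed_segment v a2)"
    "\<phi> (closed_segment v a1) \<noteq> \<phi> (closed_segment v a3)"
    "\<phi> (closed_segment v a2) \<noteq> \<phi> (closed_segment v a3)"
    using \<phi>_inj edge_in_cells e d by metis+
  moreover have "\<phi> (closed_segment v a1) edge_of K'" "\<phi> (closed_segment v a2) edge_of K'"
    "\<phi> (closed_segment v a3) edge_of K'"
    using \<phi>_edge e by simp_all
  ultimately have indep': "\<not> affine_dependent {\<psi> v, \<psi> a1, \<psi> a2, \<psi> a3}"
    unfolding \<phi>_segment[OF e(1)] \<phi>_segment[OF e(2)] \<phi>_segment[OF e(3)]
    by (rule K'.simple_vertex_affine_independent[OF \<phi>_vertex(2)[OF v], rotated 3])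
  have "{v, a1, a2, a3} \<subseteq> {u. {u} face_of K}" using v a by simp
  then have inj: "inj_on \<psi> {v, a1, a2, a3}" by (rule inj_on_subset[OF inj_on_\<psi>])
  have card': "card {\<psi> v, \<psi> a1, \<psi> a2, \<psi> a3} = 4" using card_image[OF inj] card by simp
  obtain M c where M: "invertible M" "M *v v + c = \<psi> v" "M *v a1 + c = \<psi> a1"
    "M *v a2 + c = \<psi> a2" "M *v a3 + c = \<psi> a3"
    using affine_map_between_affine_bases3[OF indep card indep' card'] by blast
  have "M *v w + c = \<psi> w" if "closed_segment v w edge_of K" for w
  proof -
    have "closed_segment v w \<in> {closed_segment v a1, closed_segment v a2, closed_segment v a3}"
      using that edges by blast
    then have "w = a1 \<or> w = a2 \<or> w = a3" by (auto simp: doubleton_eq_iff)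
    then show ?thesis using M by auto
  qed
  then show ?thesis using that M unfolding agrees_at_star_def by blast
qed

lemma agrees_at_star_facet:
  assumes agree: "agrees_at_star M c v" and v: "{v} face_of K"
    and H: "H facet_of K" "v \<in> H" and u: "{u} face_of K" "u \<in> H"
  shows "M *v u + c = \<psi> u"
proof -
  obtain e e' where ee': "e edge_of K" "e' edge_of K" "e \<noteq> e'" "v \<in> e" "v \<in> e'" "e \<subseteq> H" "e' \<subseteq> H"
    using K.facet_vertex_two_edges[OF H(1) v H(2)] by blast
  obtain a where a: "a \<noteq> v" "{a} face_of K" "e = closed_segment v a"
    using polytope_edge_at_vertex[OF K.polytope ee'(1) v ee'(4)] by blast
  obtain b where b: "b \<noteq> v" "{b} face_of K" "e' = closed_segment v b"
    using polytope_edge_at_vertex[OF K.polytope ee'(2) v ee'(5)] by blast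
  have indep: "\<not> affine_dependent {v, a, b}"
    using edges_at_vertex_affine_independent[OF K.convex] ee' a b by simp
  have "a \<noteq> b" using ee'(3) a b by auto
  then have card: "card {v, a, b} = 3" using a b by auto
  have "a \<in> H" "b \<in> H" using ee'(6,7) a b ends_in_segment by blast+
  moreover have "M *v v + c = \<psi> v" "M *v a + c = \<psi> a" "M *v b + c = \<psi> b"
    using agree ee'(1,2) a b unfolding agrees_at_star_def by auto
  ultimately show ?thesis
    using affine_agrees_on_facet[OF H(1) v a(2) b(2) u(1) H(2) _ _ u(2) indep card] by blast
qed

text \<open>Each further edge at w shares a facet with the edge wv, by simplicity, and the affine map
  already agrees with \<psi> on every vertex of a facet through v.\<close>

lemma agrees_at_star_edge:
  assumes agree: "agrees_at_star M c v" and e: "closed_segment v w edge_of K"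
  shows "agrees_at_star M c w"
  unfolding agrees_at_star_def
proof (intro allI impI)
  have fe: "closed_segment v w face_of K" using e by (simp add: edge_of_def)
  note v = segment_face_of_imp_vertex(1)[OF fe] and w = segment_face_of_imp_vertex(2)[OF fe]
  fix x assume x: "x = w \<or> closed_segment w x edge_of K"
  show "M *v x + c = \<psi> x"
  proof (cases "x = w \<or> x = v")
    case True
    then show ?thesis using agree e unfolding agrees_at_star_def by auto
  next
    case False
    then have e': "closed_segment w x edge_of K" using x by simp
    have "closed_segment w v \<noteq> closed_segment w x" using False by (auto simp: doubleton_eq_iff)
    moreover have "closed_segment w v edge_of K" using e by (simp add: closed_segment_commute)
    ultimately obtain H where H: "H facet_of K" "closed_segment w v \<subseteq> H" "closed_segment w x \<subseteq> H"
      using K.two_edges_at_vertex_common_facet[OF w _ e'] by blast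
    have "v \<in> H" "x \<in> H" using H ends_in_segment by blast+
    moreover have "{x} face_of K" using e' segment_face_of_imp_vertex(2) by (auto simp: edge_of_def)
    ultimately show ?thesis using agrees_at_star_facet[OF agree v H(1)] by blast
  qed
qed

lemma affine_image_face:
  assumes agree: "\<And>u. {u} face_of K \<Longrightarrow> M *v u + c = \<psi> u"
    and faces: "G face_of K" "G' face_of K'"
    and mem: "\<And>u. {u} face_of K \<Longrightarrow> \<psi> u \<in> G' \<longleftrightarrow> u \<in> G"
  shows "(\<lambda>x. M *v x + c) ` G = G'"
proof -
  define T where "T x = M *v x + c" for x
  have vertices: "T ` {x. {x} face_of K \<and> x \<in> G} = {y. {y} face_of K' \<and> y \<in> G'}"
  proof
    show "T ` {x. {x} face_of K \<and> x \<in> G} \<subseteq> {y. {y} face_of K' \<and> y \<in> G'}"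
      using agree mem \<phi>_vertex(2) by (auto simp: T_def)
    show "{y. {y} face_of K' \<and> y \<in> G'} \<subseteq> T ` {x. {x} face_of K \<and> x \<in> G}"
    proof
      fix y assume y: "y \<in> {y. {y} face_of K' \<and> y \<in> G'}"
      then obtain u where u: "{u} face_of K" "y = \<psi> u" using \<psi>_surj by blast
      then show "y \<in> T ` {x. {x} face_of K \<and> x \<in> G}"
        using mem y agree by (auto simp: T_def)
    qed
  qed
  have "T ` G = T ` (convex hull {x. {x} face_of K \<and> x \<in> G})"
    using polytope_face_hull_vertices[OF K.polytope faces(1)] by simp
  also have "\<dots> = convex hull (T ` {x. {x} face_of K \<and> x \<in> G})"
    unfolding T_def by (rule affine_image_convex_hull)
  also have "\<dots> = convex hull {y. {y} face_of K' \<and> y \<in> G'}"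
    using vertices by simp
  also have "\<dots> = G'"
    using polytope_face_hull_vertices[OF K'.polytope faces(2)] by simp
  finally show ?thesis unfolding T_def .
qed

lemma affine_equiv_if_agrees_on_vertices:
  assumes "invertible M" and agree: "\<And>u. {u} face_of K \<Longrightarrow> M *v u + c = \<psi> u"
  shows "polyhedra_affine_equiv K K' \<phi>"
proof -
  have "\<psi> u \<in> K' \<longleftrightarrow> u \<in> K" if "{u} face_of K" for u
    using face_of_imp_subset[OF that] face_of_imp_subset[OF \<phi>_vertex(2)[OF that]] by simp
  then have "(\<lambda>x. M *v x + c) ` K = K'"
    using affine_image_face[OF agree face_of_refl[OF K.convex] face_of_refl[OF K'.convex]] by simp
  moreover have "(\<lambda>x. M *v x + c) ` G = \<phi> G" if "G \<in> cells K" for G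
    using affine_image_face[OF agree, of G "\<phi> G"] \<phi>_cell[OF that] \<psi>_mem_iff[OF _ that] that
    by (simp add: cells_def)
  moreover have "nondeg_affine (\<lambda>x. M *v x + c)" unfolding nondeg_affine_def using assms(1) by blast
  ultimately show ?thesis unfolding polyhedra_affine_equiv_def by blast
qed

end

theorem theorem4:
  fixes K K' :: "(real^3) set"
    and \<phi> :: "(real^3) set \<Rightarrow> (real^3) set"
    and dev dev' :: "(real^3) set \<Rightarrow> real^3 \<Rightarrow> real^2"
  assumes "simple_polyhedron K" and "simple_polyhedron K'"
    and "comb_equiv K K' \<phi>"
    and "natural_development K dev" and "natural_development K' dev'"
    and "developments_facewise_affine_equiv K dev K' dev' \<phi>"
  shows "polyhedra_affine_equiv K K' \<phi>"
proof -
  interpret facewise_affine_developments K K' \<phi> dev dev'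
    using assms by unfold_locales
  have "K \<noteq> {}" using K.aff_dim by auto
  then obtain v0 where v0: "{v0} face_of K"
    using polytope_face_has_vertex[OF K.polytope face_of_refl[OF K.convex]] by blast
  obtain M c where "invertible M" and star_v0: "agrees_at_star M c v0"
    using agrees_at_star_exists[OF v0] by blast
  have "agrees_at_star M c u" if "{u} face_of K" for u
    using polytope_vertices_edge_induct[where P = "agrees_at_star M c", OF K.polytope v0 star_v0
        agrees_at_star_edge that] .
  then show ?thesis
    using affine_equiv_if_agrees_on_vertices[OF \<open>invertible M\<close>] unfolding agrees_at_star_def by blast
qed

end
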